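(* Let $e$ be a directed edge of $\Gamma$ labeled $y$, not on $T$, from $g$ to $g'=gy$. Write $\gamma=\mathrm{nf}(g)=x^{i_n}y^{\epsilon_n}\cdots x^{i_1}y^{\epsilon_1}x^{i_0}$ (so $n\ge1$, $i_0\ge1$), let $s_k=i_k+i_{k-1}+\cdots+i_0$ for $0\le k\le n$, and let $m=\min\{k\mid s_k\le0\}$ if this set is nonempty, and $m=n$ otherwise. Then $m\ge1$ and: (1) If $m=n$ or $s_m\neq0$ or $\epsilon_{m+1}=1$, then $\gamma'=\mathrm{nf}(\gamma y)=x^{i_n}y^{\epsilon_n}\cdots x^{i_{m+1}}y^{\epsilon_{m+1}}x^{s_m}yx^{-s_{m-1}-1}y^{\epsilon_m}x^{i_{m-1}}y^{\epsilon_{m-1}}\cdots x^{i_1}y^{\epsilon_1}x^{i_0+1}$. (2) Otherwise, if $m<n$, $s_m=0$ and $\epsilon_{m+1}=-1$, then $\gamma'=\mathrm{nf}(\gamma y)=x^{i_n}y^{\epsilon_n}\cdots x^{i_{m+2}}y^{\epsilon_{m+2}}x^{i_{m+1}+i_m-1}y^{\epsilon_m}x^{i_{m-1}}y^{\epsilon_{m-1}}\cdots x^{i_1}y^{\epsilon_1}x^{i_0+1}$. In each case there is a sequence of $\Sigma$-rewritings from $\gamma y$ to $\gamma'$ in which no $y^{-1}$-rules are used and exactly $m$ $y$-rules are used, whose sizes, in the order used, are $s_0,s_1,\dots,s_{m-1}$.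
   Context: $F$ is Thompson's group with generators $x,y$, $A=\{x^{\pm1},y^{\pm1}\}$, $\Gamma$ its Cayley graph over $A$. Guba–Sapir's convergent rewriting system $\Sigma$ consists of free reductions $aa^{-1}\to\emptyset$ ($a\in A$), the $y$-rules of size $i$: $y^\epsilon x^iy\to x^iyx^{-i-1}y^\epsilon x^{i+1}$, and the $y^{-1}$-rules of size $i$: $y^\epsilon x^{i+1}y^{-1}\to x^{i+1}y^{-1}x^{-i}y^\epsilon x^i$ ($\epsilon\in\{1,-1\}$, $i\ge1$); rewriting may be applied to any subword. $\mathcal N$ is the set of $\Sigma$-irreducible words (unique normal forms for $F$), and $\mathrm{nf}(w)$ denotes the word of $\mathcal N$ representing the same element as $w$. $T$ is the subtree of $\Gamma$ whose non-backtracking paths from the identity are labeled exactly by the words of $\mathcal N$. *)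

theory Defs
  imports Main
begin

datatype letter = xp | xm | yp | ym

fun linv :: "letter \<Rightarrow> letter" where
  "linv xp = xm" | "linv xm = xp" | "linv yp = ym" | "linv ym = yp"

definition xpow :: "int \<Rightarrow> letter list" where
  "xpow i = (if i \<ge> 0 then replicate (nat i) xp else replicate (nat (- i)) xm)"

definition ylet :: "int \<Rightarrow> letter" where
  "ylet e = (if e = 1 then yp else ym)"

datatype rkind = FreeR | YR int | YinvR int

inductive rstep :: "rkind \<Rightarrow> letter list \<Rightarrow> letter list \<Rightarrow> bool" where
  free: "rstep FreeR (u @ [a, linv a] @ v) (u @ v)"
| yrule: "e \<in> {1, -1} \<Longrightarrow> i \<ge> 1 \<Longrightarrow>
    rstep (YR i) (u @ [ylet e] @ xpow i @ [yp] @ v)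
                 (u @ xpow i @ [yp] @ xpow (- i - 1) @ [ylet e] @ xpow (i + 1) @ v)"
| yinvrule: "e \<in> {1, -1} \<Longrightarrow> i \<ge> 1 \<Longrightarrow>
    rstep (YinvR i) (u @ [ylet e] @ xpow (i + 1) @ [ym] @ v)
                    (u @ xpow (i + 1) @ [ym] @ xpow (- i) @ [ylet e] @ xpow i @ v)"

inductive rewrseq :: "letter list \<Rightarrow> rkind list \<Rightarrow> letter list \<Rightarrow> bool" where
  rw_nil: "rewrseq w [] w"
| rw_cons: "rstep k w w' \<Longrightarrow> rewrseq w' ks w'' \<Longrightarrow> rewrseq w (k # ks) w''"

definition reduces1 :: "letter list \<Rightarrow> letter list \<Rightarrow> bool" where
  "reduces1 w w' = (\<exists>k. rstep k w w')"

definition NF :: "letter list set" where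
  "NF = {w. \<not> (\<exists>w'. reduces1 w w')}"

text \<open>Two words represent the same element of F iff they are equivalent under the
  equivalence (Thue congruence) generated by Sigma (Sigma is a convergent presentation of F).\<close>
definition same_elem :: "letter list \<Rightarrow> letter list \<Rightarrow> bool" where
  "same_elem = (\<lambda>w v. reduces1 w v \<or> reduces1 v w)\<^sup>*\<^sup>*"

definition nf :: "letter list \<Rightarrow> letter list" where
  "nf w = (THE v. v \<in> NF \<and> same_elem w v)"

text \<open>The edge of the Cayley graph from (the element of) g labelled a lies on T iff some
  path from the identity labelled by a word of N traverses it (in either direction).\<close>
definition on_T :: "letter list \<Rightarrow> letter \<Rightarrow> bool" where
  "on_T g a = (\<exists>w \<in> NF. \<exists>j < length w.
      (same_elem (take j w) g \<and> w ! j = a) \<or> (same_elem (take j w) (g @ [a]) \<and> w ! j = linv a))"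

definition syl :: "(nat \<Rightarrow> int) \<Rightarrow> (nat \<Rightarrow> int) \<Rightarrow> nat \<Rightarrow> letter list" where
  "syl i e k = xpow (i k) @ [ylet (e k)]"

definition syls :: "(nat \<Rightarrow> int) \<Rightarrow> (nat \<Rightarrow> int) \<Rightarrow> nat \<Rightarrow> nat \<Rightarrow> letter list" where
  "syls i e a b = concat (map (syl i e) (rev [a..<Suc b]))"

definition psum :: "(nat \<Rightarrow> int) \<Rightarrow> nat \<Rightarrow> int" where
  "psum i k = (\<Sum>j\<le>k. i j)"

definition mindex :: "(nat \<Rightarrow> int) \<Rightarrow> nat \<Rightarrow> nat" where
  "mindex i n = (if \<exists>k \<le> n. psum i k \<le> 0 then (LEAST k. k \<le> n \<and> psum i k \<le> 0) else n)"

end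

theory Submission
  imports Defs "HOL-Library.Confluence"
begin

text \<open>
  Sigma terminates: the height of a y-letter is the exponent sum of x in the prefix before it,
  and every rule either deletes letters or raises the first height it changes without raising
  the maximal height.  All critical pairs of Sigma are joinable, so by Newman's lemma Sigma is
  confluent and nf w is the unique irreducible word equivalent to w.

  Since e is not on T, the word gamma y is reducible, which forces n >= 1 and i_0 >= 1.  After
  k steps the trailing y is preceded by x^{s_k}; as long as s_k >= 1, i.e. for k < m, the
  y-rule of size s_k moves it one syllable to the left.  The word reached after m steps (in
  case (2) after one more free cancellation y^{-1} y) is irreducible, because each of its
  subwords y^a x^k y^b is admissible.
\<close>

lemma ylet_simps [simp]: "ylet 1 = yp" "ylet (- 1) = ym"
  by (simp_all add: ylet_def)

lemma ylet_neq_x [simp]: "ylet e \<noteq> xp" "ylet e \<noteq> xm" "xp \<noteq> ylet e" "xm \<noteq> ylet e"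
  by (simp_all add: ylet_def)

lemma ylet_eq_iff: "e \<in> {1, -1} \<Longrightarrow> e' \<in> {1, -1} \<Longrightarrow> ylet e = ylet e' \<longleftrightarrow> e = e'"
  by (auto simp: ylet_def)

lemma ylet_eq_yp_iff: "e \<in> {1, -1} \<Longrightarrow> ylet e = yp \<longleftrightarrow> e = 1"
  and ylet_eq_ym_iff: "e \<in> {1, -1} \<Longrightarrow> ylet e = ym \<longleftrightarrow> e = -1"
  by (auto simp: ylet_def)

lemma linv_linv [simp]: "linv (linv a) = a"
  by (cases a) simp_all

lemma linv_ylet: "e \<in> {1, -1} \<Longrightarrow> linv (ylet e) = ylet (- e)"
  by (auto simp: ylet_def)

definition is_y :: "letter \<Rightarrow> bool" where
  "is_y c \<longleftrightarrow> c = yp \<or> c = ym"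

lemma is_y_simps [simp]: "is_y yp" "is_y ym" "\<not> is_y xp" "\<not> is_y xm" "is_y (ylet e)"
  by (simp_all add: is_y_def ylet_def)

lemma is_y_linv [simp]: "is_y (linv a) \<longleftrightarrow> is_y a"
  and linv_neq_self [simp]: "linv a \<noteq> a" "a \<noteq> linv a"
  by (cases a; simp)+

lemma linv_eq_iff: "linv a = b \<longleftrightarrow> a = linv b"
  by (cases a; cases b) simp_all

lemma xpow_0 [simp]: "xpow 0 = []"
  by (simp add: xpow_def)

lemma xpow_nonneg: "0 \<le> i \<Longrightarrow> xpow i = replicate (nat i) xp"
  by (simp add: xpow_def)

lemma y_notin_xpow [simp]: "yp \<notin> set (xpow i)" "ym \<notin> set (xpow i)" "ylet e \<notin> set (xpow i)"
  by (auto simp: xpow_def ylet_def)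

lemma last_xpow: "i \<noteq> 0 \<Longrightarrow> xpow i \<noteq> [] \<and> last (xpow i) \<in> {xp, xm}"
  by (auto simp: xpow_def)

lemma xpow_eq_iff [simp]: "xpow a = xpow b \<longleftrightarrow> a = b"
  by (auto simp: xpow_def split: if_splits)

lemma xpow_eq_Nil_iff [simp]: "xpow a = [] \<longleftrightarrow> a = 0" "[] = xpow a \<longleftrightarrow> a = 0"
  using xpow_eq_iff[of a 0] by auto

lemma xpow_pos_Cons: "i \<ge> 1 \<Longrightarrow> xpow i = xp # xpow (i - 1)"
  by (simp add: xpow_def nat_diff_distrib' replicate_Suc[symmetric] Suc_nat_eq_nat_zadd1)

lemma xpow_Cons_neq_xm: "0 \<le> i \<Longrightarrow> c \<noteq> xm \<Longrightarrow> xpow i @ c # w \<noteq> xm # v"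
  by (cases "i = 0") (simp_all add: xpow_pos_Cons)

lemma not_is_y_xpow: "\<forall>z \<in> set (xpow i). \<not> is_y z"
  by (auto simp: xpow_def)

lemma eq_at_first_y_iff:
  assumes "\<forall>z \<in> set u. \<not> is_y z" "\<forall>z \<in> set u'. \<not> is_y z" "is_y c" "is_y c'"
  shows "u @ c # v = u' @ c' # v' \<longleftrightarrow> u = u' \<and> c = c' \<and> v = v'"
  using assms
proof (induction u arbitrary: u')
  case Nil
  then show ?case by (cases u') auto
next
  case (Cons a u)
  then show ?case by (cases u') auto
qed

lemma eq_at_last_y_iff:
  assumes "\<forall>z \<in> set v. \<not> is_y z" "\<forall>z \<in> set v'. \<not> is_y z" "is_y c" "is_y c'"
  shows "u @ c # v = u' @ c' # v' \<longleftrightarrow> u = u' \<and> c = c' \<and> v = v'"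
proof -
  have "u @ c # v = u' @ c' # v' \<longleftrightarrow> rev v @ c # rev u = rev v' @ c' # rev u'"
    using rev_is_rev_conv[of "u @ c # v" "u' @ c' # v'"] by simp
  also have "\<dots> \<longleftrightarrow> rev v = rev v' \<and> c = c' \<and> rev u = rev u'"
    using assms by (intro eq_at_first_y_iff) auto
  finally show ?thesis
    by auto
qed

lemma xpow_y_eq_iff [simp]:
  assumes "is_y c" "is_y c'"
  shows "xpow a @ c # v = xpow b @ c' # v' \<longleftrightarrow> a = b \<and> c = c' \<and> v = v'"
    and "c # v = xpow b @ c' # v' \<longleftrightarrow> b = 0 \<and> c = c' \<and> v = v'"
    and "xpow a @ c # v = c' # v' \<longleftrightarrow> a = 0 \<and> c = c' \<and> v = v'"
  using eq_at_first_y_iff[of "xpow a" "xpow b" c c' v v']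
    eq_at_first_y_iff[of "[]" "xpow b" c c' v v']
    eq_at_first_y_iff[of "xpow a" "[]" c c' v v'] assms not_is_y_xpow
  by auto

abbreviation reduces :: "letter list \<Rightarrow> letter list \<Rightarrow> bool" where
  "reduces \<equiv> reduces1\<^sup>*\<^sup>*"

lemma rstep_in_context: "rstep k w w' \<Longrightarrow> rstep k (p @ w @ q) (p @ w' @ q)"
proof (induction rule: rstep.induct)
  case (free u a v)
  show ?case using rstep.free[of "p @ u" a "v @ q"] by simp
next
  case (yrule e i u v)
  show ?case using rstep.yrule[OF yrule, of "p @ u" "v @ q"] by simp
next
  case (yinvrule e i u v)
  show ?case using rstep.yinvrule[OF yinvrule, of "p @ u" "v @ q"] by simp
qed

lemma reduces1_in_context: "reduces1 w w' \<Longrightarrow> reduces1 (p @ w @ q) (p @ w' @ q)"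
  unfolding reduces1_def using rstep_in_context by blast

lemma reduces_in_context: "reduces w w' \<Longrightarrow> reduces (p @ w @ q) (p @ w' @ q)"
  by (induction rule: rtranclp_induct)
    (auto intro: rtranclp.rtrancl_into_rtrancl reduces1_in_context)

lemma rewrseq_single: "rstep k w w' \<Longrightarrow> rewrseq w [k] w'"
  by (auto intro: rewrseq.intros)

lemma rewrseq_append: "rewrseq w ks w' \<Longrightarrow> rewrseq w' ks' w'' \<Longrightarrow> rewrseq w (ks @ ks') w''"
  by (induction rule: rewrseq.induct) (auto intro: rewrseq.intros)

lemma rewrseq_in_context: "rewrseq w ks w' \<Longrightarrow> rewrseq (p @ w @ q) ks (p @ w' @ q)"
  by (induction rule: rewrseq.induct) (auto intro: rewrseq.intros rstep_in_context)

lemma rewrseq_imp_reduces: "rewrseq w ks w' \<Longrightarrow> reduces w w'"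
  by (induction rule: rewrseq.induct)
    (auto simp: reduces1_def intro: converse_rtranclp_into_rtranclp)

lemma rewrseq_cancel:
  "rewrseq (replicate p a @ replicate q (linv a)) (replicate (min p q) FreeR)
     (replicate (p - q) a @ replicate (q - p) (linv a))"
proof (induction p arbitrary: q)
  case 0
  show ?case by (simp add: rw_nil)
next
  case (Suc p)
  show ?case
  proof (cases q)
    case 0
    then show ?thesis by (simp add: rw_nil)
  next
    case (Suc q')
    have "rstep FreeR (replicate p a @ [a, linv a] @ replicate q' (linv a))
        (replicate p a @ replicate q' (linv a))"
      by (rule rstep.free)
    moreover have "replicate (Suc p) a @ replicate q (linv a)
        = replicate p a @ [a, linv a] @ replicate q' (linv a)"
      using Suc by (simp add: replicate_append_same[symmetric])
    ultimately show ?thesis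
      using Suc.IH[of q'] Suc by (auto intro: rw_cons)
  qed
qed

lemma rewrseq_xpow_merge: "\<exists>n. rewrseq (xpow a @ xpow b) (replicate n FreeR) (xpow (a + b))"
proof -
  have same_sign: "xpow a @ xpow b = xpow (a + b)" if "0 \<le> a \<and> 0 \<le> b \<or> a \<le> 0 \<and> b \<le> 0"
    using that by (auto simp: xpow_def replicate_add[symmetric] nat_add_distrib)
  consider "0 \<le> a \<and> 0 \<le> b \<or> a \<le> 0 \<and> b \<le> 0" | "a > 0" "b < 0" | "a < 0" "b > 0"
    by linarith
  then show ?thesis
  proof cases
    case 1
    then show ?thesis using rw_nil same_sign by (metis replicate_0)
  next
    case 2
    have "replicate (nat a - nat (- b)) xp @ replicate (nat (- b) - nat a) (linv xp) = xpow (a + b)"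
      using 2 by (cases "a + b \<ge> 0") (auto simp: xpow_def)
    then show ?thesis
      using rewrseq_cancel[of "nat a" xp "nat (- b)"] 2 by (auto simp: xpow_def)
  next
    case 3
    have "replicate (nat (- a) - nat b) xm @ replicate (nat b - nat (- a)) (linv xm) = xpow (a + b)"
      using 3 by (cases "a + b \<ge> 0") (auto simp: xpow_def)
    then show ?thesis
      using rewrseq_cancel[of "nat (- a)" xm "nat b"] 3 by (auto simp: xpow_def)
  qed
qed

lemma reduces_single: "rstep k w w' \<Longrightarrow> reduces w w'"
  unfolding reduces1_def by blast

lemma reduces_xpow_merge: "reduces (p @ xpow a @ xpow b @ q) (p @ xpow (a + b) @ q)"
  using rewrseq_xpow_merge[of a b] rewrseq_in_context rewrseq_imp_reduces by fastforce

lemma rewrseq_yrule_merged: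
  assumes "e \<in> {1, -1}" "i \<ge> 1"
  shows "\<exists>n. rewrseq (p @ xpow a @ [ylet e] @ xpow i @ [yp] @ xpow b @ q) (YR i # replicate n FreeR)
    (p @ xpow (a + i) @ [yp] @ xpow (- i - 1) @ [ylet e] @ xpow (i + 1 + b) @ q)"
proof -
  obtain n1 n2 where
    merge1: "rewrseq (xpow a @ xpow i) (replicate n1 FreeR) (xpow (a + i))" and
    merge2: "rewrseq (xpow (i + 1) @ xpow b) (replicate n2 FreeR) (xpow (i + 1 + b))"
    using rewrseq_xpow_merge by blast
  have
    "rewrseq (p @ xpow a @ xpow i @ [yp] @ xpow (- i - 1) @ [ylet e] @ xpow (i + 1) @ xpow b @ q)
      (replicate n1 FreeR)
      (p @ xpow (a + i) @ [yp] @ xpow (- i - 1) @ [ylet e] @ xpow (i + 1) @ xpow b @ q)"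
    "rewrseq (p @ xpow (a + i) @ [yp] @ xpow (- i - 1) @ [ylet e] @ xpow (i + 1) @ xpow b @ q)
      (replicate n2 FreeR)
      (p @ xpow (a + i) @ [yp] @ xpow (- i - 1) @ [ylet e] @ xpow (i + 1 + b) @ q)"
    using rewrseq_in_context[OF merge1, of p "[yp] @ xpow (- i - 1) @ [ylet e] @ xpow (i + 1)
        @ xpow b @ q"]
      rewrseq_in_context[OF merge2, of "p @ xpow (a + i) @ [yp] @ xpow (- i - 1) @ [ylet e]" q]
    by simp_all
  moreover have "rewrseq (p @ xpow a @ [ylet e] @ xpow i @ [yp] @ xpow b @ q) [YR i]
      (p @ xpow a @ xpow i @ [yp] @ xpow (- i - 1) @ [ylet e] @ xpow (i + 1) @ xpow b @ q)"
    using rewrseq_single[OF rstep.yrule[OF assms, of "p @ xpow a" "xpow b @ q"]] by simp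
  ultimately have "rewrseq (p @ xpow a @ [ylet e] @ xpow i @ [yp] @ xpow b @ q)
      ([YR i] @ replicate n1 FreeR @ replicate n2 FreeR)
      (p @ xpow (a + i) @ [yp] @ xpow (- i - 1) @ [ylet e] @ xpow (i + 1 + b) @ q)"
    by (blast intro: rewrseq_append)
  then show ?thesis
    by (auto simp flip: replicate_add)
qed

lemma rewrseq_free_merged:
  "\<exists>n. rewrseq (p @ xpow a @ [c, linv c] @ xpow b @ q) (replicate n FreeR) (p @ xpow (a + b) @ q)"
proof -
  obtain n where "rewrseq (xpow a @ xpow b) (replicate n FreeR) (xpow (a + b))"
    using rewrseq_xpow_merge by blast
  then have "rewrseq (p @ xpow a @ xpow b @ q) (replicate n FreeR) (p @ xpow (a + b) @ q)"
    using rewrseq_in_context by fastforce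
  with rstep.free[of "p @ xpow a" c "xpow b @ q"] have
    "rewrseq (p @ xpow a @ [c, linv c] @ xpow b @ q) (FreeR # replicate n FreeR) (p @ xpow (a + b)
        @ q)"
    by (simp add: rw_cons)
  then show ?thesis
    by (metis replicate_Suc)
qed

lemma reduces_yrule_merged:
  assumes "e \<in> {1, -1}" "i \<ge> 1"
  shows "reduces (p @ xpow a @ [ylet e] @ xpow i @ [yp] @ xpow b @ q)
    (p @ xpow (a + i) @ [yp] @ xpow (- i - 1) @ [ylet e] @ xpow (i + 1 + b) @ q)"
  using rewrseq_yrule_merged[OF assms] rewrseq_imp_reduces by blast

lemma reduces_yinvrule_merged:
  assumes "e \<in> {1, -1}" "i \<ge> 1"
  shows "reduces (p @ xpow a @ [ylet e] @ xpow (i + 1) @ [ym] @ xpow b @ q)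
    (p @ xpow (a + i + 1) @ [ym] @ xpow (- i) @ [ylet e] @ xpow (i + b) @ q)"
proof -
  have "reduces (p @ xpow a @ [ylet e] @ xpow (i + 1) @ [ym] @ xpow b @ q)
      ((p @ xpow a) @ xpow (i + 1) @ [ym] @ xpow (- i) @ [ylet e] @ xpow i @ xpow b @ q)"
    using reduces_single[OF rstep.yinvrule[OF assms, of "p @ xpow a" "xpow b @ q"]] by simp
  also have "reduces \<dots> (p @ xpow (a + (i + 1)) @ [ym] @ xpow (- i) @ [ylet e] @ xpow i @ xpow b
      @ q)"
    using reduces_xpow_merge by simp
  also have "reduces \<dots> ((p @ xpow (a + i + 1) @ [ym] @ xpow (- i) @ [ylet e]) @ xpow (i + b) @ q)"
    using reduces_xpow_merge[of "p @ xpow (a + i + 1) @ [ym] @ xpow (- i)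
        @ [ylet e]"] by (simp add: add.assoc)
  finally show ?thesis by simp
qed

lemma reduces_free_merged: "reduces (p @ xpow a @ [c, linv c] @ xpow b @ q) (p @ xpow (a + b) @ q)"
  using rewrseq_free_merged rewrseq_imp_reduces by blast

section \<open>Termination\<close>

fun xexp :: "letter \<Rightarrow> int" where
  "xexp xp = 1" | "xexp xm = -1" | "xexp yp = 0" | "xexp ym = 0"

definition x_sum :: "letter list \<Rightarrow> int" where
  "x_sum w = sum_list (map xexp w)"

fun y_heights :: "int \<Rightarrow> letter list \<Rightarrow> int list" where
  "y_heights h [] = []"
| "y_heights h (c # w) = (if is_y c then h # y_heights h w else y_heights (h + xexp c) w)"

definition depths :: "int list \<Rightarrow> nat list" where
  "depths H = map (\<lambda>h. nat (Max (set H) - h)) H"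

lemma x_sum_simps [simp]:
  "x_sum [] = 0" "x_sum (c # w) = xexp c + x_sum w" "x_sum (u @ v) = x_sum u + x_sum v"
  by (simp_all add: x_sum_def)

lemma y_heights_append: "y_heights h (u @ v) = y_heights h u @ y_heights (h + x_sum u) v"
  by (induction u arbitrary: h) (auto simp: algebra_simps is_y_def)

lemma x_sum_xpow [simp]: "x_sum (xpow i) = i"
  and y_heights_xpow [simp]: "y_heights h (xpow i) = []"
proof -
  have "x_sum (replicate n xp) = int n" "x_sum (replicate n xm) = - int n" for n
    by (induction n) auto
  then show "x_sum (xpow i) = i" by (simp add: xpow_def)
  have "y_heights h (replicate n c) = []" if "\<not> is_y c" for n h c
    using that by (induction n arbitrary: h) auto
  then show "y_heights h (xpow i) = []" by (simp add: xpow_def)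
qed

text \<open>A y-rule replaces the heights \<open>h, h + i\<close> of its two y-letters by \<open>h + i, h - 1\<close>, a
  y-inverse rule replaces \<open>h, h + i + 1\<close> by \<open>h + i + 1, h + 1\<close>.\<close>

lemma depths_decrease:
  assumes "a < b" "c < b"
  shows "(depths (P @ [b, c] @ Q), depths (P @ [a, b] @ Q)) \<in> lenlex less_than"
proof -
  let ?S = "insert b (set P \<union> set Q)"
  have b_le_Max: "b \<le> Max ?S" by simp
  have Max_insert_less: "Max (insert x ?S) = Max ?S" if "x < b" for x
  proof -
    have "x \<le> Max ?S"
      using that b_le_Max by linarith
    then show ?thesis by (simp add: max_absorb2)
  qed
  have "set (P @ [b, c] @ Q) = insert c ?S" "set (P @ [a, b] @ Q) = insert a ?S"
    by auto
  then have max_eq: "Max (set (P @ [b, c] @ Q)) = Max ?S" "Max (set (P @ [a, b] @ Q)) = Max ?S"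
    using Max_insert_less[OF assms(2)] Max_insert_less[OF assms(1)] by simp_all
  have "nat (Max ?S - b) < nat (Max ?S - a)"
    unfolding zless_nat_conj using assms(1) b_le_Max by linarith
  then show ?thesis
    unfolding depths_def max_eq lenlex_conv lex_conv
    by (auto intro!: exI[of _ "map (\<lambda>h. nat (Max ?S - h)) P"])
qed

definition rewrite_order :: "(letter list \<times> letter list) set" where
  "rewrite_order =
     inv_image (lenlex less_than <*lex*> less_than) (\<lambda>w. (depths (y_heights 0 w), length w))"

lemma reduces1_decreases: "reduces1 w w' \<Longrightarrow> (w', w) \<in> rewrite_order"
proof -
  assume "reduces1 w w'"
  then obtain k where "rstep k w w'"
    by (auto simp: reduces1_def)
  then show ?thesis
  proof cases
    case (free u a v)
    show ?thesis
    proof (cases "is_y a")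
      case True
      then have "length (y_heights 0 w') < length (y_heights 0 w)"
        using free True by (simp add: y_heights_append)
      then show ?thesis
        unfolding rewrite_order_def by (simp add: depths_def lenlex_conv)
    next
      case False
      then have "y_heights 0 w' = y_heights 0 w"
        using free by (cases a) (auto simp: y_heights_append)
      then show ?thesis
        unfolding rewrite_order_def using free by simp
    qed
  next
    case (yrule e i u v)
    let ?h = "x_sum u"
    have "y_heights 0 w = y_heights 0 u @ [?h, ?h + i] @ y_heights (?h + i) v"
      "y_heights 0 w' = y_heights 0 u @ [?h + i, ?h - 1] @ y_heights (?h + i) v"
      using yrule by (simp_all add: y_heights_append algebra_simps)
    then show ?thesis
      unfolding rewrite_order_def using depths_decrease[of ?h "?h + i" "?h - 1"] yrule by simp
  next
    case (yinvrule e i u v)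
    let ?h = "x_sum u"
    have "y_heights 0 w = y_heights 0 u @ [?h, ?h + i + 1] @ y_heights (?h + i + 1) v"
      "y_heights 0 w' = y_heights 0 u @ [?h + i + 1, ?h + 1] @ y_heights (?h + i + 1) v"
      using yinvrule by (simp_all add: y_heights_append algebra_simps)
    then show ?thesis
      unfolding rewrite_order_def using depths_decrease[of ?h "?h + i + 1"
          "?h + 1"] yinvrule by simp
  qed
qed

lemma wf_reduces1: "wf {(w', w). reduces1 w w'}"
proof (rule wf_subset)
  show "wf rewrite_order"
    unfolding rewrite_order_def by (intro wf_inv_image wf_lex_prod wf_lenlex wf_less_than)
qed (auto intro: reduces1_decreases)

section \<open>Critical pairs\<close>

text \<open>Used to apply a rule up to arithmetic in the exponents: the two equations are solved
  by \<open>simp\<close> with \<open>xpow_eq_iff\<close> and \<open>xpow_y_eq_iff\<close>.\<close>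
lemma reduces_subst: "reduces w w' \<Longrightarrow> w = u \<Longrightarrow> w' = u' \<Longrightarrow> reduces u u'"
  by simp

definition joinable :: "letter list \<Rightarrow> letter list \<Rightarrow> bool" where
  "joinable w w' \<longleftrightarrow> (\<exists>d. reduces w d \<and> reduces w' d)"

lemma joinableI: "reduces w d \<Longrightarrow> reduces w' d \<Longrightarrow> joinable w w'"
  unfolding joinable_def by blast

lemma joinable_refl: "joinable w w"
  unfolding joinable_def by blast

lemma joinable_sym: "joinable w w' \<Longrightarrow> joinable w' w"
  unfolding joinable_def by blast

lemma joinable_in_context: "joinable w w' \<Longrightarrow> joinable (p @ w @ q) (p @ w' @ q)"
  unfolding joinable_def using reduces_in_context by blast

text \<open>The critical pairs of Sigma: in \<open>joinable_r_r'\<close> the rule \<open>r\<close> overlaps the rule \<open>r'\<close>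
  in one letter; the left word results from applying \<open>r\<close>, the right one from applying \<open>r'\<close>.\<close>

lemma joinable_free_yrule:
  assumes "e \<in> {1, -1}" "i \<ge> 1"
  shows "joinable (xpow i @ [yp] @ v)
    ([ylet (- e)] @ xpow i @ [yp] @ xpow (- i - 1) @ [ylet e] @ xpow (i + 1) @ v)"
proof -
  have "reduces ([ylet (- e)] @ xpow i @ [yp] @ xpow (- i - 1) @ [ylet e] @ xpow (i + 1) @ v)
      (xpow i @ [yp] @ xpow (- i - 1) @ [ylet (- e), ylet e] @ xpow (i + 1) @ v)"
    by (rule reduces_subst[OF reduces_yrule_merged[of "- e" i "[]" 0 "- i - 1"
        "[ylet e] @ xpow (i + 1) @ v"]])
      (use assms in \<open>auto simp: linv_ylet\<close>)
  also have "reduces \<dots> (xpow i @ [yp] @ v)"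
    by (rule reduces_subst[OF reduces_free_merged[of "xpow i @ [yp]" "- i - 1" "ylet (- e)"
        "i + 1" v]])
      (use assms in \<open>auto simp: linv_ylet\<close>)
  finally show ?thesis
    by (intro joinableI[OF rtranclp.rtrancl_refl])
qed

lemma joinable_free_yinvrule:
  assumes "e \<in> {1, -1}" "i \<ge> 1"
  shows "joinable (xpow (i + 1) @ [ym] @ v)
    ([ylet (- e)] @ xpow (i + 1) @ [ym] @ xpow (- i) @ [ylet e] @ xpow i @ v)"
proof -
  have "reduces ([ylet (- e)] @ xpow (i + 1) @ [ym] @ xpow (- i) @ [ylet e] @ xpow i @ v)
      (xpow (i + 1) @ [ym] @ xpow (- i) @ [ylet (- e), ylet e] @ xpow i @ v)"
    by (rule reduces_subst[OF reduces_yinvrule_merged[of "- e" i "[]" 0 "- i"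
        "[ylet e] @ xpow i @ v"]])
      (use assms in \<open>auto simp: linv_ylet\<close>)
  also have "reduces \<dots> (xpow (i + 1) @ [ym] @ v)"
    by (rule reduces_subst[OF reduces_free_merged[of "xpow (i + 1) @ [ym]" "- i" "ylet (- e)" i v]])
      (use assms in \<open>auto simp: linv_ylet\<close>)
  finally show ?thesis
    by (intro joinableI[OF rtranclp.rtrancl_refl])
qed

lemma joinable_yrule_free:
  assumes "e \<in> {1, -1}" "i \<ge> 1"
  shows "joinable (xpow i @ [yp] @ xpow (- i - 1) @ [ylet e] @ xpow (i + 1) @ [ym] @ v)
    ([ylet e] @ xpow i @ v)"
proof -
  have "reduces (xpow i @ [yp] @ xpow (- i - 1) @ [ylet e] @ xpow (i + 1) @ [ym] @ v)
      (xpow i @ [yp, ym] @ xpow (- i) @ [ylet e] @ xpow i @ v)"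
    by (rule reduces_subst[OF reduces_yinvrule_merged[of e i "xpow i @ [yp]" "- i - 1" 0 v]])
      (use assms in \<open>auto simp: linv_ylet\<close>)
  also have "reduces \<dots> ([ylet e] @ xpow i @ v)"
    by (rule reduces_subst[OF reduces_free_merged[of "[]" i yp "- i" "[ylet e] @ xpow i @ v"]])
      (use assms in \<open>auto simp: linv_ylet\<close>)
  finally show ?thesis
    by (intro joinableI[OF _ rtranclp.rtrancl_refl])
qed

lemma joinable_yrule_yrule:
  assumes "e \<in> {1, -1}" "i \<ge> 1" "j \<ge> 1"
  shows "joinable (xpow i @ [yp] @ xpow (- i - 1) @ [ylet e] @ xpow (i + 1) @ xpow j @ [yp] @ v)
    ([ylet e] @ xpow i @ xpow j @ [yp] @ xpow (- j - 1) @ [yp] @ xpow (j + 1) @ v)"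
  (is "joinable ?l ?r")
proof -
  let ?w = "xpow (i + j) @ [yp] @ xpow (- j - 1) @ [yp] @ xpow (- i - 1) @ [ylet e]
      @ xpow (i + j + 2) @ v"
  have "reduces ?l (xpow i @ [yp] @ xpow (- i - 1) @ [ylet e] @ xpow (i + j + 1) @ [yp] @ v)"
    by (rule reduces_subst[OF reduces_xpow_merge[of "xpow i @ [yp] @ xpow (- i - 1) @ [ylet e]"
        "i + 1" j "[yp] @ v"]])
      (use assms in \<open>auto simp: linv_ylet\<close>)
  also have "reduces \<dots> (xpow i @ [yp] @ xpow j @ [yp] @ xpow (- i - j - 2) @ [ylet e]
      @ xpow (i + j + 2) @ v)"
    by (rule reduces_subst[OF reduces_yrule_merged[of e "i + j + 1" "xpow i @ [yp]" "- i - 1" 0 v]])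
      (use assms in \<open>auto simp: linv_ylet\<close>)
  also have "reduces \<dots> ?w"
    by (rule reduces_subst[OF reduces_yrule_merged[of 1 j "[]" i "- i - j - 2"
        "[ylet e] @ xpow (i + j + 2) @ v"]])
      (use assms in \<open>auto simp: linv_ylet\<close>)
  finally have left: "reduces ?l ?w" .
  have "reduces ?r ([ylet e] @ xpow (i + j) @ [yp] @ xpow (- j - 1) @ [yp] @ xpow (j + 1) @ v)"
    by (rule reduces_subst[OF reduces_xpow_merge[of "[ylet e]" i j "[yp] @ xpow (- j - 1) @ [yp]
        @ xpow (j + 1) @ v"]])
      (use assms in \<open>auto simp: linv_ylet\<close>)
  also have "reduces \<dots> (xpow (i + j) @ [yp] @ xpow (- i - j - 1) @ [ylet e] @ xpow i @ [yp]
      @ xpow (j + 1) @ v)"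
    by (rule reduces_subst[OF reduces_yrule_merged[of e "i + j" "[]" 0 "- j - 1"
        "[yp] @ xpow (j + 1) @ v"]])
      (use assms in \<open>auto simp: linv_ylet\<close>)
  also have "reduces \<dots> ?w"
    by (rule reduces_subst[OF reduces_yrule_merged[of e i "xpow (i + j) @ [yp]" "- i - j - 1"
        "j + 1" v]])
      (use assms in \<open>auto simp: linv_ylet\<close>)
  finally show ?thesis
    using left by (intro joinableI)
qed

lemma joinable_yrule_yinvrule:
  assumes "e \<in> {1, -1}" "i \<ge> 1" "j \<ge> 1"
  shows "joinable (xpow i @ [yp] @ xpow (- i - 1) @ [ylet e] @ xpow (i + 1) @ xpow (j + 1) @ [ym]
      @ v)
    ([ylet e] @ xpow i @ xpow (j + 1) @ [ym] @ xpow (- j) @ [yp] @ xpow j @ v)"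
  (is "joinable ?l ?r")
proof -
  let ?w = "xpow (i + j + 1) @ [ym] @ xpow (- j) @ [yp] @ xpow (- i - 1) @ [ylet e]
      @ xpow (i + j + 1) @ v"
  have "reduces ?l (xpow i @ [yp] @ xpow (- i - 1) @ [ylet e] @ xpow (i + j + 1 + 1) @ [ym] @ v)"
    by (rule reduces_subst[OF reduces_xpow_merge[of "xpow i @ [yp] @ xpow (- i - 1) @ [ylet e]"
        "i + 1" "j + 1" "[ym] @ v"]])
      (use assms in \<open>auto simp: linv_ylet\<close>)
  also have "reduces \<dots> (xpow i @ [yp] @ xpow (j + 1) @ [ym] @ xpow (- i - j - 1) @ [ylet e]
      @ xpow (i + j + 1) @ v)"
    by (rule reduces_subst[OF reduces_yinvrule_merged[of e "i + j + 1" "xpow i @ [yp]"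
        "- i - 1" 0 v]])
      (use assms in \<open>auto simp: linv_ylet\<close>)
  also have "reduces \<dots> ?w"
    by (rule reduces_subst[OF reduces_yinvrule_merged[of 1 j "[]" i "- i - j - 1"
        "[ylet e] @ xpow (i + j + 1) @ v"]])
      (use assms in \<open>auto simp: linv_ylet\<close>)
  finally have left: "reduces ?l ?w" .
  have "reduces ?r ([ylet e] @ xpow (i + j + 1) @ [ym] @ xpow (- j) @ [yp] @ xpow j @ v)"
    by (rule reduces_subst[OF reduces_xpow_merge[of "[ylet e]" i "j + 1" "[ym] @ xpow (- j) @ [yp]
        @ xpow j @ v"]])
      (use assms in \<open>auto simp: linv_ylet\<close>)
  also have "reduces \<dots> (xpow (i + j + 1) @ [ym] @ xpow (- i - j) @ [ylet e] @ xpow i @ [yp]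
      @ xpow j @ v)"
    by (rule reduces_subst[OF reduces_yinvrule_merged[of e "i + j" "[]" 0 "- j" "[yp] @ xpow j
        @ v"]])
      (use assms in \<open>auto simp: linv_ylet\<close>)
  also have "reduces \<dots> ?w"
    by (rule reduces_subst[OF reduces_yrule_merged[of e i "xpow (i + j + 1) @ [ym]" "- i - j" j v]])
      (use assms in \<open>auto simp: linv_ylet\<close>)
  finally show ?thesis
    using left by (intro joinableI)
qed

lemma joinable_yinvrule_free:
  assumes "e \<in> {1, -1}" "i \<ge> 1"
  shows "joinable (xpow (i + 1) @ [ym] @ xpow (- i) @ [ylet e] @ xpow i @ [yp] @ v)
    ([ylet e] @ xpow (i + 1) @ v)"
proof -
  have "reduces (xpow (i + 1) @ [ym] @ xpow (- i) @ [ylet e] @ xpow i @ [yp] @ v)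
      (xpow (i + 1) @ [ym, yp] @ xpow (- i - 1) @ [ylet e] @ xpow (i + 1) @ v)"
    by (rule reduces_subst[OF reduces_yrule_merged[of e i "xpow (i + 1) @ [ym]" "- i" 0 v]])
      (use assms in \<open>auto simp: linv_ylet\<close>)
  also have "reduces \<dots> ([ylet e] @ xpow (i + 1) @ v)"
    by (rule reduces_subst[OF reduces_free_merged[of "[]" "i + 1" ym "- i - 1"
        "[ylet e] @ xpow (i + 1) @ v"]])
      (use assms in \<open>auto simp: linv_ylet\<close>)
  finally show ?thesis
    by (intro joinableI[OF _ rtranclp.rtrancl_refl])
qed

lemma joinable_yinvrule_yrule:
  assumes "e \<in> {1, -1}" "i \<ge> 1" "j \<ge> 1"
  shows "joinable (xpow (i + 1) @ [ym] @ xpow (- i) @ [ylet e] @ xpow i @ xpow j @ [yp] @ v)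
    ([ylet e] @ xpow (i + 1) @ xpow j @ [yp] @ xpow (- j - 1) @ [ym] @ xpow (j + 1) @ v)"
  (is "joinable ?l ?r")
proof -
  let ?w = "xpow (i + j + 1) @ [yp] @ xpow (- j - 1) @ [ym] @ xpow (- i) @ [ylet e]
      @ xpow (i + j + 1) @ v"
  have "reduces ?l (xpow (i + 1) @ [ym] @ xpow (- i) @ [ylet e] @ xpow (i + j) @ [yp] @ v)"
    by (rule reduces_subst[OF reduces_xpow_merge[of "xpow (i + 1) @ [ym] @ xpow (- i)
        @ [ylet e]" i j "[yp] @ v"]])
      (use assms in \<open>auto simp: linv_ylet\<close>)
  also have "reduces \<dots> (xpow (i + 1) @ [ym] @ xpow j @ [yp] @ xpow (- i - j - 1) @ [ylet e]
      @ xpow (i + j + 1) @ v)"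
    by (rule reduces_subst[OF reduces_yrule_merged[of e "i + j" "xpow (i + 1) @ [ym]" "- i" 0 v]])
      (use assms in \<open>auto simp: linv_ylet\<close>)
  also have "reduces \<dots> ?w"
    by (rule reduces_subst[OF reduces_yrule_merged[of "- 1" j "[]" "i + 1" "- i - j - 1"
        "[ylet e] @ xpow (i + j + 1) @ v"]])
      (use assms in \<open>auto simp: linv_ylet\<close>)
  finally have left: "reduces ?l ?w" .
  have "reduces ?r ([ylet e] @ xpow (i + j + 1) @ [yp] @ xpow (- j - 1) @ [ym] @ xpow (j + 1) @ v)"
    by (rule reduces_subst[OF reduces_xpow_merge[of "[ylet e]" "i + 1" j "[yp] @ xpow (- j - 1)
        @ [ym] @ xpow (j + 1) @ v"]])
      (use assms in \<open>auto simp: linv_ylet\<close>)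
  also have "reduces \<dots> (xpow (i + j + 1) @ [yp] @ xpow (- i - j - 2) @ [ylet e] @ xpow (i + 1)
      @ [ym] @ xpow (j + 1) @ v)"
    by (rule reduces_subst[OF reduces_yrule_merged[of e "i + j + 1" "[]" 0 "- j - 1" "[ym]
        @ xpow (j + 1) @ v"]])
      (use assms in \<open>auto simp: linv_ylet\<close>)
  also have "reduces \<dots> ?w"
    by (rule reduces_subst[OF reduces_yinvrule_merged[of e i "xpow (i + j + 1) @ [yp]"
        "- i - j - 2" "j + 1" v]])
      (use assms in \<open>auto simp: linv_ylet\<close>)
  finally show ?thesis
    using left by (intro joinableI)
qed

lemma joinable_yinvrule_yinvrule:
  assumes "e \<in> {1, -1}" "i \<ge> 1" "j \<ge> 1"
  shows "joinable (xpow (i + 1) @ [ym] @ xpow (- i) @ [ylet e] @ xpow i @ xpow (j + 1) @ [ym] @ v)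
    ([ylet e] @ xpow (i + 1) @ xpow (j + 1) @ [ym] @ xpow (- j) @ [ym] @ xpow j @ v)"
  (is "joinable ?l ?r")
proof -
  let ?w = "xpow (i + j + 2) @ [ym] @ xpow (- j) @ [ym] @ xpow (- i) @ [ylet e] @ xpow (i + j) @ v"
  have "reduces ?l (xpow (i + 1) @ [ym] @ xpow (- i) @ [ylet e] @ xpow (i + j + 1) @ [ym] @ v)"
    by (rule reduces_subst[OF reduces_xpow_merge[of "xpow (i + 1) @ [ym] @ xpow (- i)
        @ [ylet e]" i "j + 1" "[ym] @ v"]])
      (use assms in \<open>auto simp: linv_ylet\<close>)
  also have "reduces \<dots> (xpow (i + 1) @ [ym] @ xpow (j + 1) @ [ym] @ xpow (- i - j) @ [ylet e]
      @ xpow (i + j) @ v)"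
    by (rule reduces_subst[OF reduces_yinvrule_merged[of e "i + j" "xpow (i + 1) @ [ym]"
        "- i" 0 v]])
      (use assms in \<open>auto simp: linv_ylet\<close>)
  also have "reduces \<dots> ?w"
    by (rule reduces_subst[OF reduces_yinvrule_merged[of "- 1" j "[]" "i + 1" "- i - j"
        "[ylet e] @ xpow (i + j) @ v"]])
      (use assms in \<open>auto simp: linv_ylet\<close>)
  finally have left: "reduces ?l ?w" .
  have "reduces ?r ([ylet e] @ xpow (i + j + 2) @ [ym] @ xpow (- j) @ [ym] @ xpow j @ v)"
    by (rule reduces_subst[OF reduces_xpow_merge[of "[ylet e]" "i + 1" "j + 1" "[ym] @ xpow (- j)
        @ [ym] @ xpow j @ v"]])
      (use assms in \<open>auto simp: linv_ylet\<close>)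
  also have "reduces \<dots> (xpow (i + j + 2) @ [ym] @ xpow (- i - j - 1) @ [ylet e] @ xpow (i + 1)
      @ [ym] @ xpow j @ v)"
    by (rule reduces_subst[OF reduces_yinvrule_merged[of e "i + j + 1" "[]" 0 "- j" "[ym] @ xpow j
        @ v"]])
      (use assms in \<open>auto simp: linv_ylet\<close>)
  also have "reduces \<dots> ?w"
    by (rule reduces_subst[OF reduces_yinvrule_merged[of e i "xpow (i + j + 2) @ [ym]"
        "- i - j - 1" j v]])
      (use assms in \<open>auto simp: linv_ylet\<close>)
  finally show ?thesis
    using left by (intro joinableI)
qed

inductive rule_instance :: "letter list \<Rightarrow> letter list \<Rightarrow> bool" where
  free_rule: "rule_instance [a, linv a] []"
| y_rule: "e \<in> {1, -1} \<Longrightarrow> i \<ge> 1 \<Longrightarrow>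
    rule_instance ([ylet e] @ xpow i @ [yp])
      (xpow i @ [yp] @ xpow (- i - 1) @ [ylet e] @ xpow (i + 1))"
| yinv_rule: "e \<in> {1, -1} \<Longrightarrow> i \<ge> 1 \<Longrightarrow>
    rule_instance ([ylet e] @ xpow (i + 1) @ [ym])
      (xpow (i + 1) @ [ym] @ xpow (- i) @ [ylet e] @ xpow i)"

lemma reduces1_iff_rule_instance:
  "reduces1 w w' \<longleftrightarrow> (\<exists>u l r v. rule_instance l r \<and> w = u @ l @ v \<and> w' = u @ r @ v)"
proof
  assume "reduces1 w w'"
  then obtain k where "rstep k w w'"
    by (auto simp: reduces1_def)
  then show "\<exists>u l r v. rule_instance l r \<and> w = u @ l @ v \<and> w' = u @ r @ v"
  proof cases
    case (free u a v)
    then show ?thesis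
      using free_rule by fastforce
  next
    case (yrule e i u v)
    then have "w = u @ ([ylet e] @ xpow i @ [yp]) @ v"
      "w' = u @ (xpow i @ [yp] @ xpow (- i - 1) @ [ylet e] @ xpow (i + 1)) @ v"
      by simp_all
    then show ?thesis
      using y_rule[of e i] yrule by blast
  next
    case (yinvrule e i u v)
    then have "w = u @ ([ylet e] @ xpow (i + 1) @ [ym]) @ v"
      "w' = u @ (xpow (i + 1) @ [ym] @ xpow (- i) @ [ylet e] @ xpow i) @ v"
      by simp_all
    then show ?thesis
      using yinv_rule[of e i] yinvrule by blast
  qed
next
  assume "\<exists>u l r v. rule_instance l r \<and> w = u @ l @ v \<and> w' = u @ r @ v"
  then obtain u l r v where "rule_instance l r" and w: "w = u @ l @ v" and w': "w' = u @ r @ v"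
    by blast
  then have "\<exists>k. rstep k (u @ l @ v) (u @ r @ v)"
  proof cases
    case (free_rule a)
    then show ?thesis using rstep.free[of u a v] by auto
  next
    case (y_rule e i)
    then show ?thesis using rstep.yrule[of e i u v] by auto
  next
    case (yinv_rule e i)
    then show ?thesis using rstep.yinvrule[of e i u v] by auto
  qed
  then show "reduces1 w w'"
    unfolding reduces1_def w w' .
qed

lemma rule_instance_reduces1: "rule_instance l r \<Longrightarrow> reduces1 (u @ l @ v) (u @ r @ v)"
  using reduces1_iff_rule_instance by blast

lemma suffix_of_y_block:
  assumes "t @ us = c # xpow i @ [d]" "us \<noteq> []" "i \<ge> 0"
  obtains "t = []" | "t = c # xpow i" "us = [d]" | k where "k \<ge> 1" "us = xpow k @ [d]"
proof (cases t)
  case (Cons c' t')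
  let ?n = "nat i"
  have "t' @ us = replicate ?n xp @ [d]"
    using assms(1,3) Cons by (simp add: xpow_nonneg)
  then have t': "t' = take (length t') (replicate ?n xp @ [d])"
    and us: "us = drop (length t') (replicate ?n xp @ [d])"
    by (simp_all add: append_eq_conv_conj)
  have "length t' \<le> ?n"
    using us assms(2) by (auto simp: le_less_Suc_eq)
  show thesis
  proof (cases "length t' = ?n")
    case True
    have "t = c # xpow i"
      using t'[unfolded True] Cons assms(1,3) by (simp add: xpow_nonneg)
    moreover have "us = [d]"
      using us[unfolded True] by simp
    ultimately show thesis
      using that(2) by blast
  next
    case False
    then obtain k where "?n - length t' = Suc k"
      using \<open>length t' \<le> ?n\<close> by (metis Suc_diff_Suc le_neq_implies_less)
    moreover have "xpow (int (Suc k)) = replicate (Suc k) xp"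
      by (simp only: xpow_nonneg of_nat_0_le_iff nat_int)
    ultimately show thesis
      using that(3)[of "int (Suc k)"] us \<open>length t' \<le> ?n\<close> by simp
  qed
qed (use that in simp)

lemma overlap_free_joinable:
  assumes "rule_instance l2 r2" "t @ us = [a, linv a]" "us \<noteq> []" "us @ v1 = l2 @ v2"
  shows "joinable v1 (t @ r2 @ v2)"
proof -
  consider "t = []" "us = [a, linv a]" | "t = [a]" "us = [linv a]"
    using assms(2,3) by (cases t) (auto simp: Cons_eq_append_conv append_eq_Cons_conv)
  then show ?thesis
  proof cases
    case 1
    from assms(1) show ?thesis
    proof cases
      case (free_rule b)
      then show ?thesis
        using 1 assms(4) by (simp add: joinable_refl)
    next
      case (y_rule e i)
      then show ?thesis
        using 1 assms(4) by (auto simp: linv_ylet)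
    next
      case (yinv_rule e i)
      then show ?thesis
        using 1 assms(4) by (auto simp: linv_ylet)
    qed
  next
    case 2
    from assms(1) show ?thesis
    proof cases
      case (free_rule b)
      then show ?thesis
        using 2 assms(4) by (auto simp: joinable_refl)
    next
      case (y_rule e i)
      then have "a = ylet (- e)" "v1 = xpow i @ [yp] @ v2"
        using 2 assms(4) by (auto simp: linv_eq_iff linv_ylet)
      then show ?thesis
        using 2 y_rule joinable_free_yrule[of e i v2] by simp
    next
      case (yinv_rule e i)
      then have "a = ylet (- e)" "v1 = xpow (i + 1) @ [ym] @ v2"
        using 2 assms(4) by (auto simp: linv_eq_iff linv_ylet)
      then show ?thesis
        using 2 yinv_rule joinable_free_yinvrule[of e i v2] by simp
    qed
  qed
qed

lemma overlap_yrule_joinable: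
  assumes "rule_instance l2 r2" "e \<in> {1, -1}" "i \<ge> 1"
    "t @ us = ylet e # xpow i @ [yp]" "us \<noteq> []" "us @ v1 = l2 @ v2"
  shows "joinable (xpow i @ [yp] @ xpow (- i - 1) @ [ylet e] @ xpow (i + 1) @ v1) (t @ r2 @ v2)"
proof (rule suffix_of_y_block[OF assms(4,5)])
  show "0 \<le> i"
    using assms(3) by simp
next
  assume "t = []"
  with assms(1) show ?thesis
    by cases (use assms(2-6) in \<open>auto simp: linv_ylet ylet_eq_iff joinable_refl\<close>)
next
  assume "t = ylet e # xpow i" "us = [yp]"
  with assms(1) show ?thesis
    by cases
      (use assms(2,3,6) joinable_yrule_free[of e i v2] joinable_yrule_yrule[of e i _ v2]
        joinable_yrule_yinvrule[of e i _ v2] in \<open>auto simp: ylet_eq_yp_iff\<close>)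
next
  fix k
  assume "k \<ge> 1" "us = xpow k @ [yp]"
  then have "xp # xpow (k - 1) @ yp # v1 = l2 @ v2"
    using assms(6) xpow_pos_Cons[of k] by simp
  with assms(1) show ?thesis
    by cases (use \<open>k \<ge> 1\<close> xpow_Cons_neq_xm[of "k - 1" yp v1 v2] in auto)
qed

lemma overlap_yinvrule_joinable:
  assumes "rule_instance l2 r2" "e \<in> {1, -1}" "i \<ge> 1"
    "t @ us = ylet e # xpow (i + 1) @ [ym]" "us \<noteq> []" "us @ v1 = l2 @ v2"
  shows "joinable (xpow (i + 1) @ [ym] @ xpow (- i) @ [ylet e] @ xpow i @ v1) (t @ r2 @ v2)"
proof (rule suffix_of_y_block[OF assms(4,5)])
  show "0 \<le> i + 1"
    using assms(3) by simp
next
  assume "t = []"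
  with assms(1) show ?thesis
    by cases (use assms(2-6) in \<open>auto simp: linv_ylet ylet_eq_iff joinable_refl\<close>)
next
  assume "t = ylet e # xpow (i + 1)" "us = [ym]"
  with assms(1) show ?thesis
    by cases
      (use assms(2,3,6) joinable_yinvrule_free[of e i v2] joinable_yinvrule_yrule[of e i _ v2]
        joinable_yinvrule_yinvrule[of e i _ v2] in \<open>auto simp: ylet_eq_ym_iff\<close>)
next
  fix k
  assume "k \<ge> 1" "us = xpow k @ [ym]"
  then have "xp # xpow (k - 1) @ ym # v1 = l2 @ v2"
    using assms(6) xpow_pos_Cons[of k] by simp
  with assms(1) show ?thesis
    by cases (use \<open>k \<ge> 1\<close> xpow_Cons_neq_xm[of "k - 1" ym v1 v2] in auto)
qed

lemma append_eq_append_le_length: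
  "u1 @ x = u2 @ y \<Longrightarrow> length u1 \<le> length u2 \<Longrightarrow> \<exists>t. u2 = u1 @ t \<and> x = t @ y"
  by (auto simp: append_eq_append_conv_if intro!: exI[of _ "drop (length u1) u2"])
    (metis append_take_drop_id)

lemma joinable_redexes:
  assumes "rule_instance l1 r1" "rule_instance l2 r2" "u1 @ l1 @ v1 = u2 @ l2 @ v2"
    and "length u1 \<le> length u2"
  shows "joinable (u1 @ r1 @ v1) (u2 @ r2 @ v2)"
proof -
  obtain t where t: "u2 = u1 @ t" "l1 @ v1 = t @ l2 @ v2"
    using append_eq_append_le_length[OF assms(3,4)] by blast
  then obtain us where
    "l1 = t @ us \<and> us @ v1 = l2 @ v2 \<or> l1 @ us = t \<and> v1 = us @ l2 @ v2"
    using append_eq_append_conv2[of l1 v1 t "l2 @ v2"] by blast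
  then consider (disjoint) zs where "t = l1 @ zs" "v1 = zs @ l2 @ v2"
    | (overlap) "l1 = t @ us" "us @ v1 = l2 @ v2" "us \<noteq> []"
    by (cases "us = []") auto
  then have "joinable (r1 @ v1) (t @ r2 @ v2)"
  proof cases
    case disjoint
    have "reduces1 (r1 @ zs @ l2 @ v2) (r1 @ zs @ r2 @ v2)"
      "reduces1 (l1 @ zs @ r2 @ v2) (r1 @ zs @ r2 @ v2)"
      using rule_instance_reduces1[OF assms(2), of "r1 @ zs" v2]
        rule_instance_reduces1[OF assms(1), of "[]" "zs @ r2 @ v2"] by simp_all
    then show ?thesis
      unfolding joinable_def using disjoint by auto
  next
    case overlap
    from assms(1) show ?thesis
      by cases (use overlap assms(2) overlap_free_joinable overlap_yrule_joinable
          overlap_yinvrule_joinable in auto)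
  qed
  then show ?thesis
    using joinable_in_context[of _ _ u1 "[]"] t(1) by simp
qed

lemma local_confluence: "reduces1 w w1 \<Longrightarrow> reduces1 w w2 \<Longrightarrow> joinable w1 w2"
  unfolding reduces1_iff_rule_instance
  by (metis joinable_redexes joinable_sym nle_le)

section \<open>Confluence and normal forms\<close>

lemma newman:
  assumes wf: "wf {(y, x). r x y}"
    and local_conf: "\<And>x y z. r x y \<Longrightarrow> r x z \<Longrightarrow> \<exists>u. r\<^sup>*\<^sup>* y u \<and> r\<^sup>*\<^sup>* z u"
  shows "confluentp r"
proof (rule confluentpI)
  show "\<exists>u. r\<^sup>*\<^sup>* y u \<and> r\<^sup>*\<^sup>* z u" if "r\<^sup>*\<^sup>* x y" "r\<^sup>*\<^sup>* x z" for x y z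
    using that
  proof (induction x arbitrary: y z rule: wf_induct_rule[OF wf])
    case (1 x)
    show ?case
    proof (cases "x = y \<or> x = z")
      case True
      then show ?thesis
        using "1.prems" by blast
    next
      case False
      then obtain y1 z1 where y1: "r x y1" "r\<^sup>*\<^sup>* y1 y" and z1: "r x z1" "r\<^sup>*\<^sup>* z1 z"
        using "1.prems" by (metis converse_rtranclpE)
      obtain u where u: "r\<^sup>*\<^sup>* y1 u" "r\<^sup>*\<^sup>* z1 u"
        using local_conf[OF y1(1) z1(1)] by blast
      obtain u' where u': "r\<^sup>*\<^sup>* y u'" "r\<^sup>*\<^sup>* u u'"
        using "1.IH"[OF _ y1(2) u(1)] y1(1) by blast
      have "r\<^sup>*\<^sup>* z1 u'"
        using u(2) u'(2) by (rule rtranclp_trans)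
      then obtain u'' where "r\<^sup>*\<^sup>* z u''" "r\<^sup>*\<^sup>* u' u''"
        using "1.IH"[OF _ z1(2)] z1(1) by blast
      then show ?thesis
        using u'(1) by (blast intro: rtranclp_trans)
    qed
  qed
qed

lemma confluentp_reduces1: "confluentp reduces1"
  using newman[OF wf_reduces1] local_confluence unfolding joinable_def by blast

lemma same_elem_eq_equivclp: "same_elem = equivclp reduces1"
  unfolding same_elem_def equivclp_def symclp_def ..

lemma same_elem_iff_joinable: "same_elem w w' \<longleftrightarrow> joinable w w'"
proof -
  have "same_elem w w' \<longleftrightarrow> (reduces1\<^sup>*\<^sup>* OO reduces1\<inverse>\<inverse>\<^sup>*\<^sup>*) w w'"
    unfolding same_elem_eq_equivclp using confluentp_reduces1
    by (simp add: confluentp_eq_semiconfluentp semiconfluentp_equivclp)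
  then show ?thesis
    by (simp add: joinable_def relcompp_apply rtranclp_conversep)
qed

lemma NF_reduces_eq: "w \<in> NF \<Longrightarrow> reduces w w' \<Longrightarrow> w' = w"
  unfolding NF_def by (auto elim: converse_rtranclpE)

lemma NF_unique: "w \<in> NF \<Longrightarrow> w' \<in> NF \<Longrightarrow> same_elem w w' \<Longrightarrow> w = w'"
  unfolding same_elem_iff_joinable joinable_def using NF_reduces_eq by metis

lemma reduces_imp_same_elem: "reduces w w' \<Longrightarrow> same_elem w w'"
  unfolding same_elem_iff_joinable by (blast intro: joinableI)

lemma NF_exists: "\<exists>v \<in> NF. same_elem w v"
proof -
  obtain v where "reduces w v" and irreducible: "\<And>v'. reduces1 v v' \<Longrightarrow> \<not> reduces w v'"
    using wfE_min[OF wf_reduces1, of w "{v. reduces w v}"] by auto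
  then have "v \<in> NF"
    unfolding NF_def by (auto intro: rtranclp.rtrancl_into_rtrancl)
  then show ?thesis
    using \<open>reduces w v\<close> reduces_imp_same_elem by blast
qed

lemma nf_eqI:
  assumes "v \<in> NF" "same_elem w v"
  shows "nf w = v"
  unfolding nf_def
proof (rule the_equality)
  show "v \<in> NF \<and> same_elem w v"
    using assms ..
  show "v' = v" if "v' \<in> NF \<and> same_elem w v'" for v'
  proof (rule NF_unique)
    show "same_elem v' v"
      using that assms(2) unfolding same_elem_eq_equivclp
      by (blast intro: equivclp_sym equivclp_trans)
  qed (use that assms(1) in auto)
qed

lemma nf_in_NF: "nf w \<in> NF"
  and same_elem_nf: "same_elem w (nf w)"
  using NF_exists[of w] nf_eqI by auto

section \<open>Recognising normal forms\<close>

lemma NF_infix: "u @ w @ v \<in> NF \<Longrightarrow> w \<in> NF"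
  unfolding NF_def using reduces1_in_context by blast

lemma NF_Nil: "[] \<in> NF"
  unfolding NF_def reduces1_iff_rule_instance
  by (auto elim: rule_instance.cases)

lemma NF_snoc:
  assumes "w \<in> NF" and no_redex: "\<And>u l r. rule_instance l r \<Longrightarrow> w @ [d] \<noteq> u @ l"
  shows "w @ [d] \<in> NF"
  unfolding NF_def mem_Collect_eq
proof
  assume "\<exists>w'. reduces1 (w @ [d]) w'"
  then obtain u l r v where lr: "rule_instance l r" and split: "w @ [d] = u @ l @ v"
    unfolding reduces1_iff_rule_instance by blast
  show False
  proof (cases v rule: rev_cases)
    case Nil
    then show False
      using no_redex[OF lr, of u] split by simp
  next
    case (snoc v' z)
    then have "w = u @ l @ v'"
      using split by (metis append.assoc append1_eq_conv)
    then show False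
      using assms(1) rule_instance_reduces1[OF lr] unfolding NF_def by blast
  qed
qed

lemma NF_append_replicate_x:
  assumes "w \<in> NF" "\<not> is_y c" "w = [] \<or> is_y (last w)"
  shows "w @ replicate n c \<in> NF"
proof (induction n)
  case 0
  then show ?case using assms(1) by simp
next
  case (Suc n)
  have "(w @ replicate n c) @ [c] \<in> NF"
  proof (rule NF_snoc[OF Suc.IH])
    fix u l r
    assume "rule_instance l r"
    then show "(w @ replicate n c) @ [c] \<noteq> u @ l"
    proof cases
      case (free_rule a)
      show ?thesis
      proof
        assume "(w @ replicate n c) @ [c] = u @ l"
        then have "(w @ replicate n c) @ [c] = (u @ [a]) @ [linv a]"
          by (simp only: free_rule append_assoc append_Cons append_Nil)
        then have split: "w @ replicate n c = u @ [a]" and c: "c = linv a"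
          unfolding append1_eq_conv by blast+
        show False
        proof (cases n)
          case 0
          then show False
            using split assms(2,3) c by auto
        next
          case (Suc m)
          then have "last (w @ replicate n c) = c"
            by simp
          then show False
            using split c by simp
        qed
      qed
    qed (use assms(2) in \<open>auto simp: is_y_def\<close>)
  qed
  then show ?case
    by (simp add: replicate_append_same[symmetric])
qed

lemma NF_append_xpow: "w \<in> NF \<Longrightarrow> w = [] \<or> is_y (last w) \<Longrightarrow> w @ xpow k \<in> NF"
  unfolding xpow_def by (simp add: NF_append_replicate_x)

lemma NF_xpow: "xpow k \<in> NF"
  using NF_append_xpow[OF NF_Nil] by simp

text \<open>\<open>admissible a k b\<close> says that \<open>y\<^sup>a x\<^sup>k y\<^sup>b\<close> contains no left-hand side of Sigma.\<close>

definition admissible :: "int \<Rightarrow> int \<Rightarrow> int \<Rightarrow> bool" where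
  "admissible a k b \<longleftrightarrow> \<not> (k = 0 \<and> b = - a) \<and> \<not> (b = 1 \<and> k \<ge> 1) \<and> \<not> (b = -1 \<and> k \<ge> 2)"

lemma snoc_eq_rule_instance_cases:
  assumes "w @ [d] = u @ l" "rule_instance l r"
  obtains (free) c where "w = u @ [c]" "d = linv c"
    | (y) e i where "w = u @ ylet e # xpow i" "d = yp" "i \<ge> 1"
    | (yinv) e i where "w = u @ ylet e # xpow (i + 1)" "d = ym" "i \<ge> 1"
  using assms(2)
proof cases
  case (free_rule c)
  then have "w @ [d] = (u @ [c]) @ [linv c]"
    using assms(1) by simp
  then show thesis
    using that(1) unfolding append1_eq_conv by blast
next
  case (y_rule e i)
  then have "w @ [d] = (u @ ylet e # xpow i) @ [yp]"
    using assms(1) by simp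
  then show thesis
    using that(2) y_rule unfolding append1_eq_conv by blast
next
  case (yinv_rule e i)
  then have "w @ [d] = (u @ ylet e # xpow (i + 1)) @ [ym]"
    using assms(1) by simp
  then show thesis
    using that(3) yinv_rule unfolding append1_eq_conv by blast
qed

lemma NF_snoc_y:
  assumes nf: "u @ ylet a # xpow k \<in> NF" and "a \<in> {1, -1}" "b \<in> {1, -1}" "admissible a k b"
  shows "u @ ylet a # xpow k @ [ylet b] \<in> NF"
proof -
  have "(u @ ylet a # xpow k) @ [ylet b] \<in> NF"
  proof (rule NF_snoc[OF nf])
    fix U l r
    assume lr: "rule_instance l r"
    show "(u @ ylet a # xpow k) @ [ylet b] \<noteq> U @ l"
    proof
      assume "(u @ ylet a # xpow k) @ [ylet b] = U @ l"
      from this lr show False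
      proof (cases rule: snoc_eq_rule_instance_cases)
        case (free c)
        show False
        proof (cases "k = 0")
          case True
          then show False
            using free assms(2-4) by (auto simp: linv_ylet ylet_eq_iff admissible_def)
        next
          case False
          then have "c \<in> {xp, xm}"
            using free last_xpow[of k] by (metis last_appendR last_snoc list.distinct(1) last_ConsR)
          then show False
            using free by auto
        qed
      next
        case (y e i)
        then show False
          using assms(3,4) eq_at_last_y_iff[OF not_is_y_xpow not_is_y_xpow, of "ylet a"
              "ylet e" u k U i]
          by (simp add: ylet_eq_yp_iff admissible_def)
      next
        case (yinv e i)
        then show False
          using assms(3,4) eq_at_last_y_iff[OF not_is_y_xpow not_is_y_xpow, of "ylet a"
              "ylet e" u k U "i + 1"]
          by (simp add: ylet_eq_ym_iff admissible_def)
      qed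
    qed
  qed
  then show ?thesis by simp
qed

lemma NF_xpow_y: "xpow k @ [ylet b] \<in> NF"
proof (rule NF_snoc[OF NF_xpow])
  fix U l r
  assume lr: "rule_instance l r"
  show "xpow k @ [ylet b] \<noteq> U @ l"
  proof
    assume "xpow k @ [ylet b] = U @ l"
    from this lr show False
    proof (cases rule: snoc_eq_rule_instance_cases)
      case (free c)
      then have "c \<in> {xp, xm}"
        using last_xpow[of k] by (metis last_snoc snoc_eq_iff_butlast xpow_0)
      then show False
        using free by auto
    next
      case (y e i)
      then have "ylet e \<in> set (xpow k)" by simp
      then show False by simp
    next
      case (yinv e i)
      then have "ylet e \<in> set (xpow k)" by simp
      then show False by simp
    qed
  qed
qed

lemma admissible_if_NF:
  assumes nf: "u @ ylet a # xpow k @ ylet b # v \<in> NF" and a: "a \<in> {1, -1}"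
  shows "admissible a k b"
proof -
  have irreducible: False
    if "rule_instance l r" "u @ ylet a # xpow k @ ylet b # v = u @ l @ v" for l r
    using nf that rule_instance_reduces1[OF that(1), of u v] unfolding NF_def by auto
  have "\<not> (k = 0 \<and> b = - a)"
    using irreducible[OF free_rule[of "ylet a"]] a by (auto simp: linv_ylet)
  moreover have "\<not> (b = 1 \<and> k \<ge> 1)"
    using irreducible[OF y_rule[OF a, of k]] by auto
  moreover have "\<not> (b = -1 \<and> k \<ge> 2)"
    using irreducible[OF yinv_rule[OF a, of "k - 1"]] by auto
  ultimately show ?thesis
    unfolding admissible_def by blast
qed

lemma syls_empty: "b < a \<Longrightarrow> syls i e a b = []"
  by (simp add: syls_def)

lemma syls_append: "a \<le> Suc c \<Longrightarrow> c \<le> b \<Longrightarrow> syls i e a b = syls i e (Suc c) b @ syls i e a c"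
proof -
  assume "a \<le> Suc c" "c \<le> b"
  then have "[a..<Suc c + (b - c)] = [a..<Suc c] @ [Suc c..<Suc c + (b - c)]"
    by (intro upt_add_eq_append)
  moreover have "Suc c + (b - c) = Suc b"
    using \<open>c \<le> b\<close> by simp
  ultimately have "[a..<Suc b] = [a..<Suc c] @ [Suc c..<Suc b]"
    by simp
  then show ?thesis
    by (simp add: syls_def)
qed

lemma syls_Suc:
  "a \<le> Suc b \<Longrightarrow> syls i e a (Suc b) = xpow (i (Suc b)) @ ylet (e (Suc b)) # syls i e a b"
  using syls_append[of a b "Suc b"] by (simp add: syls_def syl_def)

lemma syls_lowest: "a \<le> b \<Longrightarrow> syls i e a b = syls i e (Suc a) b @ xpow (i a) @ [ylet (e a)]"
  using syls_append[of a a b] by (simp add: syls_def syl_def)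

lemma last_syls: "a \<le> b \<Longrightarrow> syls i e a b \<noteq> [] \<and> last (syls i e a b) = ylet (e a)"
  by (simp add: syls_lowest)

lemma NF_append_syls:
  assumes "P @ [ylet (e (Suc b))] \<in> NF" "1 \<le> a" "e (Suc b) \<in> {1, -1}"
    and "\<And>k. a \<le> k \<Longrightarrow> k \<le> b \<Longrightarrow> e k \<in> {1, -1} \<and> admissible (e (Suc k)) (i k) (e k)"
  shows "P @ [ylet (e (Suc b))] @ syls i e a b \<in> NF"
  using assms
proof (induction b arbitrary: P)
  case 0
  then show ?case by (simp add: syls_empty)
next
  case (Suc b)
  show ?case
  proof (cases "a \<le> Suc b")
    case False
    then show ?thesis
      using Suc.prems(1) by (simp add: syls_empty)
  next
    case True
    let ?P = "P @ [ylet (e (Suc (Suc b)))] @ xpow (i (Suc b))"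
    have step: "e (Suc b) \<in> {1, -1} \<and> admissible (e (Suc (Suc b))) (i (Suc b)) (e (Suc b))"
      using Suc.prems(4) True by blast
    have "?P \<in> NF"
      using NF_append_xpow[OF Suc.prems(1)] by simp
    then have "?P @ [ylet (e (Suc b))] \<in> NF"
      using NF_snoc_y[of P] Suc.prems(3) step by simp
    then have "?P @ [ylet (e (Suc b))] @ syls i e a b \<in> NF"
      using Suc.IH[of ?P] Suc.prems(2,4) step by simp
    then show ?thesis
      using True by (simp add: syls_Suc)
  qed
qed

lemma psum_0 [simp]: "psum i 0 = i 0"
  and psum_Suc [simp]: "psum i (Suc k) = psum i k + i (Suc k)"
  by (simp_all add: psum_def)

lemma mindex_le: "mindex i n \<le> n"
  using LeastI_ex[of "\<lambda>k. k \<le> n \<and> psum i k \<le> 0"] by (auto simp: mindex_def)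

lemma psum_mindex: "mindex i n < n \<Longrightarrow> psum i (mindex i n) \<le> 0"
  using LeastI_ex[of "\<lambda>k. k \<le> n \<and> psum i k \<le> 0"] by (auto simp: mindex_def split: if_splits)

lemma psum_below_mindex:
  assumes "k < mindex i n"
  shows "psum i k \<ge> 1"
proof (cases "\<exists>k \<le> n. psum i k \<le> 0")
  case True
  then have "k < (LEAST k. k \<le> n \<and> psum i k \<le> 0)"
    using assms by (simp add: mindex_def)
  then have "\<not> (k \<le> n \<and> psum i k \<le> 0)"
    by (rule not_less_Least)
  moreover have "k \<le> n"
    using assms mindex_le[of i n] by simp
  ultimately show ?thesis
    by simp
next
  case False
  then have "mindex i n = n"
    unfolding mindex_def by (simp only: if_False)
  then have "k \<le> n"
    using assms by simp
  then have "\<not> psum i k \<le> 0"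
    using False by blast
  then show ?thesis
    by simp
qed

lemma mindex_pos: "1 \<le> i 0 \<Longrightarrow> 1 \<le> n \<Longrightarrow> 1 \<le> mindex i n"
  using psum_mindex[of i n] by (cases "mindex i n") auto

section \<open>Rewriting \<open>\<gamma> y\<close>\<close>

text \<open>The word reached from \<open>\<gamma> y\<close> after the \<open>y\<close>-rules of sizes \<open>s\<^sub>0, \<dots>, s\<^sub>k\<^sub>-\<^sub>1\<close>
  (for \<open>k \<ge> 1\<close>).\<close>

definition stage_word :: "(nat \<Rightarrow> int) \<Rightarrow> (nat \<Rightarrow> int) \<Rightarrow> nat \<Rightarrow> nat \<Rightarrow> letter list" where
  "stage_word i e n k = syls i e (k + 1) n @ xpow (psum i k) @ [yp] @ xpow (- psum i (k - 1) - 1)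
     @ [ylet (e k)] @ syls i e 1 (k - 1) @ xpow (i 0 + 1)"

lemma rewrseq_stage_word:
  assumes "1 \<le> k" "k \<le> n" "\<And>j. j < k \<Longrightarrow> psum i j \<ge> 1" "\<And>j. 1 \<le> j \<Longrightarrow> j \<le> n \<Longrightarrow> e j \<in> {1, -1}"
  shows "\<exists>ks. rewrseq (syls i e 1 n @ xpow (i 0) @ [yp]) ks (stage_word i e n k) \<and>
    filter (\<lambda>k. k \<noteq> FreeR) ks = map (\<lambda>j. YR (psum i j)) [0..<k]"
  using assms
proof (induction k rule: nat_induct_at_least)
  case base
  obtain m where
    "rewrseq (syls i e 2 n @ xpow (i 1) @ [ylet (e 1)] @ xpow (i 0) @ [yp] @ xpow 0 @ [])
      (YR (i 0) # replicate m FreeR)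
      (syls i e 2 n @ xpow (i 1 + i 0) @ [yp] @ xpow (- i 0 - 1) @ [ylet (e 1)]
        @ xpow (i 0 + 1 + 0) @ [])"
    using rewrseq_yrule_merged[of "e 1" "i 0" "syls i e 2 n" "i 1" 0 "[]"] base.prems by auto
  moreover have "syls i e 1 n = syls i e 2 n @ xpow (i 1) @ [ylet (e 1)]"
    using syls_lowest[of 1 n] base.prems by (simp add: numeral_2_eq_2)
  ultimately show ?case
    by (intro exI[of _ "YR (i 0) # replicate m FreeR"])
      (simp add: stage_word_def syls_empty ac_simps numeral_2_eq_2)
next
  case (Suc k)
  obtain ks where ks: "rewrseq (syls i e 1 n @ xpow (i 0) @ [yp]) ks (stage_word i e n k)"
    "filter (\<lambda>k. k \<noteq> FreeR) ks = map (\<lambda>j. YR (psum i j)) [0..<k]"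
    using Suc by auto
  obtain k' where k': "k = Suc k'"
    using Suc.hyps by (cases k) auto
  let ?q = "[ylet (e k)] @ syls i e 1 k' @ xpow (i 0 + 1)"
  obtain m where "rewrseq (syls i e (k + 2) n @ xpow (i (Suc k)) @ [ylet (e (Suc k))]
        @ xpow (psum i k) @ [yp] @ xpow (- psum i k' - 1) @ ?q)
      (YR (psum i k) # replicate m FreeR)
      (syls i e (k + 2) n @ xpow (i (Suc k) + psum i k) @ [yp] @ xpow (- psum i k - 1)
        @ [ylet (e (Suc k))] @ xpow (psum i k + 1 + (- psum i k' - 1)) @ ?q)"
    using rewrseq_yrule_merged[of "e (Suc k)" "psum i k" "syls i e (k + 2) n" "i (Suc k)"
        "- psum i k' - 1" ?q]
      Suc.prems by auto
  moreover have "stage_word i e n k = syls i e (k + 2) n @ xpow (i (Suc k)) @ [ylet (e (Suc k))]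
      @ xpow (psum i k) @ [yp] @ xpow (- psum i k' - 1) @ ?q"
    using syls_lowest[of "Suc k" n] Suc.prems k' by (simp add: stage_word_def)
  moreover have "stage_word i e n (Suc k) = syls i e (k + 2) n @ xpow (i (Suc k) + psum i k) @ [yp]
      @ xpow (- psum i k - 1) @ [ylet (e (Suc k))] @ xpow (psum i k + 1 + (- psum i k' - 1)) @ ?q"
    using k' by (simp add: stage_word_def syls_Suc ac_simps)
  ultimately show ?case
    using ks rewrseq_append[OF ks(1)]
    by (intro exI[of _ "ks @ YR (psum i k) # replicate m FreeR"]) simp
qed

definition nf_gamma_y :: "(nat \<Rightarrow> int) \<Rightarrow> (nat \<Rightarrow> int) \<Rightarrow> nat \<Rightarrow> letter list" where
  "nf_gamma_y i e n = (let m = mindex i n; s = psum i in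
     if m = n \<or> s m \<noteq> 0 \<or> e (m + 1) = 1
     then syls i e (m + 1) n @ xpow (s m) @ [yp] @ xpow (- s (m - 1) - 1) @ [ylet (e m)]
          @ syls i e 1 (m - 1) @ xpow (i 0 + 1)
     else syls i e (m + 2) n @ xpow (i (m + 1) + i m - 1) @ [ylet (e m)]
          @ syls i e 1 (m - 1) @ xpow (i 0 + 1))"

lemma nf_gamma_y_eq:
  "nf_gamma_y i e n = (let m = mindex i n in
     if m = n \<or> psum i m \<noteq> 0 \<or> e (m + 1) = 1 then stage_word i e n m
     else syls i e (m + 2) n @ xpow (i (m + 1) + i m - 1) @ [ylet (e m)]
          @ syls i e 1 (m - 1) @ xpow (i 0 + 1))"
  unfolding nf_gamma_y_def stage_word_def Let_def ..

locale gamma_nf =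
  fixes i e :: "nat \<Rightarrow> int" and n :: nat
  assumes signs: "\<And>k. 1 \<le> k \<Longrightarrow> k \<le> n \<Longrightarrow> e k \<in> {1, -1}"
    and n_pos: "1 \<le> n"
    and i0_pos: "1 \<le> i 0"
    and NF_gamma: "syls i e 1 n @ xpow (i 0) \<in> NF"
begin

abbreviation m :: nat where
  "m \<equiv> mindex i n"

lemma m_pos: "1 \<le> m"
  using mindex_pos[of i n] i0_pos n_pos by simp

lemma m_le: "m \<le> n"
  by (rule mindex_le)

lemma psum_pred_m: "psum i (m - 1) \<ge> 1"
  using psum_below_mindex[of "m - 1" i n] m_pos by simp

lemma psum_m: "psum i m = psum i (m - 1) + i m"
  using m_pos psum_Suc[of i "m - 1"] by simp

lemma rewrseq_nf_gamma_y:
  "\<exists>ks. rewrseq (syls i e 1 n @ xpow (i 0) @ [yp]) ks (nf_gamma_y i e n) \<and>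
     filter (\<lambda>k. k \<noteq> FreeR) ks = map (\<lambda>j. YR (psum i j)) [0..<m]"
proof -
  obtain ks where ks: "rewrseq (syls i e 1 n @ xpow (i 0) @ [yp]) ks (stage_word i e n m)"
    "filter (\<lambda>k. k \<noteq> FreeR) ks = map (\<lambda>j. YR (psum i j)) [0..<m]"
    using rewrseq_stage_word[of m n i e] m_pos m_le psum_below_mindex[of _ i n] signs by blast
  show ?thesis
  proof (cases "m = n \<or> psum i m \<noteq> 0 \<or> e (m + 1) = 1")
    case True
    then show ?thesis
      using ks by (auto simp: nf_gamma_y_eq Let_def)
  next
    case False
    then have "e (m + 1) = -1" "psum i m = 0" "m + 1 \<le> n"
      using signs[of "m + 1"] m_le by auto
    let ?p = "syls i e (m + 2) n" and ?q = "[ylet (e m)] @ syls i e 1 (m - 1) @ xpow (i 0 + 1)"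
    have stage: "stage_word i e n m = ?p @ xpow (i (m + 1)) @ [ym, linv ym]
        @ xpow (- psum i (m - 1) - 1) @ ?q"
      using syls_lowest[of "m + 1" n] \<open>e (m + 1) = -1\<close> \<open>psum i m = 0\<close> \<open>m + 1 \<le> n\<close>
      by (simp add: stage_word_def)
    have exponent: "i (m + 1) + (- psum i (m - 1) - 1) = i (m + 1) + i m - 1"
      using psum_m \<open>psum i m = 0\<close> by simp
    obtain k where
      "rewrseq (?p @ xpow (i (m + 1)) @ [ym, linv ym] @ xpow (- psum i (m - 1) - 1) @ ?q)
        (replicate k FreeR) (?p @ xpow (i (m + 1) + i m - 1) @ ?q)"
      using rewrseq_free_merged[of ?p "i (m + 1)" ym "- psum i (m - 1) - 1" ?q]
      unfolding exponent ..
    then have "rewrseq (syls i e 1 n @ xpow (i 0) @ [yp]) (ks @ replicate k FreeR)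
        (nf_gamma_y i e n)"
      using rewrseq_append[OF ks(1)] stage False by (simp add: nf_gamma_y_eq Let_def)
    then show ?thesis
      using ks(2) by (intro exI[of _ "ks @ replicate k FreeR"]) simp
  qed
qed

lemma admissible_gamma:
  assumes "1 \<le> k" "k < n"
  shows "admissible (e (Suc k)) (i k) (e k)"
proof -
  obtain k' where k': "k = Suc k'"
    using assms(1) by (cases k) auto
  have "syls i e 1 n @ xpow (i 0) = (syls i e (Suc (Suc k)) n @ xpow (i (Suc k)))
      @ ylet (e (Suc k)) # xpow (i k) @ ylet (e k) # syls i e 1 k' @ xpow (i 0)"
    using syls_append[of 1 k n i e] syls_lowest[of "Suc k" n i e] syls_Suc[of 1 k' i e] assms k'
    by simp
  then show ?thesis
    using admissible_if_NF NF_gamma signs assms by (metis Suc_leI le_SucI less_imp_le_nat)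
qed

lemma NF_syls_upper: "c \<le> n \<Longrightarrow> syls i e (Suc c) n \<in> NF"
  using NF_gamma syls_append[of 1 c n i e] NF_infix[of "[]"] by simp

lemma NF_append_tail:
  assumes "P @ [ylet (e k)] \<in> NF" "1 \<le> k" "k \<le> n"
  shows "P @ [ylet (e k)] @ syls i e 1 (k - 1) @ xpow (i 0 + 1) \<in> NF"
proof -
  have "P @ [ylet (e (Suc (k - 1)))] @ syls i e 1 (k - 1) \<in> NF"
  proof (rule NF_append_syls)
    show "e j \<in> {1, -1} \<and> admissible (e (Suc j)) (i j) (e j)" if "1 \<le> j" "j \<le> k - 1" for j
      using that assms(3) signs admissible_gamma by simp
  qed (use assms signs in simp_all)
  then have "P @ [ylet (e k)] @ syls i e 1 (k - 1) \<in> NF"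
    using assms(2) by simp
  moreover have "is_y (last (P @ [ylet (e k)] @ syls i e 1 (k - 1)))"
    by (cases "1 \<le> k - 1") (simp_all add: last_syls syls_empty)
  ultimately have "(P @ [ylet (e k)] @ syls i e 1 (k - 1)) @ xpow (i 0 + 1) \<in> NF"
    using NF_append_xpow by blast
  then show ?thesis
    by simp
qed

lemma NF_stage_word:
  assumes "m = n \<or> psum i m \<noteq> 0 \<or> e (m + 1) = 1"
  shows "stage_word i e n m \<in> NF"
proof -
  have "syls i e (m + 1) n @ xpow (psum i m) @ [yp] \<in> NF"
  proof (cases "m = n")
    case True
    then show ?thesis
      using NF_xpow_y[of "psum i m" 1] by (simp add: syls_empty)
  next
    case False
    then have "m < n"
      using m_le by simp
    have split: "syls i e (m + 1) n = syls i e (m + 2) n @ xpow (i (m + 1)) @ [ylet (e (m + 1))]"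
      using syls_lowest[of "m + 1" n] \<open>m < n\<close> by simp
    have "(syls i e (m + 2) n @ xpow (i (m + 1))) @ ylet (e (m + 1)) # xpow (psum i m) \<in> NF"
      using NF_append_xpow[OF NF_syls_upper[of m]] m_le split by simp
    moreover have "admissible (e (m + 1)) (psum i m) 1"
      using assms psum_mindex[of i n] \<open>m < n\<close> by (auto simp: admissible_def)
    ultimately show ?thesis
      using NF_snoc_y[of "syls i e (m + 2) n @ xpow (i (m + 1))" "e (m + 1)" "psum i m" 1]
        signs[of "m + 1"] \<open>m < n\<close> split by simp
  qed
  then have "(syls i e (m + 1) n @ xpow (psum i m)) @ ylet 1 # xpow (- psum i (m - 1) - 1) \<in> NF"
    using NF_append_xpow[of "syls i e (m + 1) n @ xpow (psum i m) @ [yp]"] by simp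
  moreover have "admissible 1 (- psum i (m - 1) - 1) (e m)"
    using psum_pred_m by (simp add: admissible_def)
  ultimately have "(syls i e (m + 1) n @ xpow (psum i m) @ [yp] @ xpow (- psum i (m - 1) - 1))
      @ [ylet (e m)] \<in> NF"
    using NF_snoc_y[of "syls i e (m + 1) n @ xpow (psum i m)" 1 "- psum i (m - 1) - 1" "e m"]
      signs m_pos m_le by simp
  then show ?thesis
    unfolding stage_word_def
    using NF_append_tail[of "syls i e (m + 1) n @ xpow (psum i m) @ [yp]
        @ xpow (- psum i (m - 1) - 1)" m]
      m_pos m_le by simp
qed

lemma NF_cancelled:
  assumes "m < n" "psum i m = 0" "e (m + 1) = -1"
  shows "syls i e (m + 2) n @ xpow (i (m + 1) + i m - 1) @ [ylet (e m)] @ syls i e 1 (m - 1)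
      @ xpow (i 0 + 1) \<in> NF"
proof -
  let ?c = "i (m + 1) + i m - 1"
  have "syls i e (m + 2) n @ xpow ?c @ [ylet (e m)] \<in> NF"
  proof (cases "m + 1 = n")
    case True
    then show ?thesis
      using NF_xpow_y by (simp add: syls_empty)
  next
    case False
    then have "m + 2 \<le> n"
      using assms(1) by simp
    have split: "syls i e (m + 2) n = syls i e (Suc (m + 2)) n @ xpow (i (m + 2))
        @ [ylet (e (m + 2))]"
      using syls_lowest[of "m + 2" n] \<open>m + 2 \<le> n\<close> by simp
    have "(syls i e (Suc (m + 2)) n @ xpow (i (m + 2))) @ ylet (e (m + 2)) # xpow ?c \<in> NF"
      using NF_append_xpow[OF NF_syls_upper[of "m + 1"]] \<open>m + 2 \<le> n\<close> split by simp
    moreover have "i (m + 1) \<le> 1"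
      using admissible_gamma[of "m + 1"] \<open>m + 2 \<le> n\<close> assms(3) by (simp add: admissible_def)
    then have "?c < 0"
      using psum_m assms(2) psum_pred_m by simp
    then have "admissible (e (m + 2)) ?c (e m)"
      by (simp add: admissible_def)
    ultimately show ?thesis
      using NF_snoc_y[of "syls i e (Suc (m + 2)) n @ xpow (i (m + 2))" "e (m + 2)" ?c "e m"]
        signs[of "m + 2"] signs[of m] m_pos \<open>m + 2 \<le> n\<close> split by simp
  qed
  then show ?thesis
    using NF_append_tail[of "syls i e (m + 2) n @ xpow ?c" m] m_pos m_le by simp
qed

lemma NF_nf_gamma_y: "nf_gamma_y i e n \<in> NF"
proof (cases "m = n \<or> psum i m \<noteq> 0 \<or> e (m + 1) = 1")
  case True
  then show ?thesis
    using NF_stage_word by (simp add: nf_gamma_y_eq Let_def)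
next
  case False
  then have "m < n" "psum i m = 0" "e (m + 1) = -1"
    using signs[of "m + 1"] m_le by auto
  then show ?thesis
    using NF_cancelled False by (simp add: nf_gamma_y_eq Let_def)
qed

end

section \<open>Edges off the tree \<open>T\<close>\<close>

lemma same_elem_append: "same_elem w w' \<Longrightarrow> same_elem (w @ t) (w' @ t)"
  unfolding same_elem_eq_equivclp
proof (induction rule: equivclp_induct)
  case (step y z)
  then show ?case
    using reduces1_in_context[of y z "[]" t] reduces1_in_context[of z y "[]" t]
    by (auto intro: equivclp_into_equivclp)
qed simp

lemma on_T_if_NF_snoc: "nf g @ [a] \<in> NF \<Longrightarrow> on_T g a"
  unfolding on_T_def
  using same_elem_nf[of g] by (intro bexI[of _ "nf g @ [a]"] exI[of _ "length (nf g)"])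
    (auto simp: same_elem_eq_equivclp intro: equivclp_sym)

lemma on_T_if_nf_snoc_linv:
  assumes "nf g = p @ [linv a]"
  shows "on_T g a"
proof -
  have "same_elem (g @ [a]) (p @ [linv a, a])"
    using same_elem_append[OF same_elem_nf, of g "[a]"] assms by simp
  moreover have "reduces1 (p @ [linv a, a]) p"
    using rstep.free[of p "linv a" "[]"] unfolding reduces1_def by auto
  then have "same_elem (p @ [linv a, a]) p"
    by (simp add: same_elem_eq_equivclp r_into_equivclp)
  ultimately have "same_elem (take (length p) (nf g)) (g @ [a])"
    using assms unfolding same_elem_eq_equivclp by (auto intro: equivclp_sym equivclp_trans)
  then show ?thesis
    unfolding on_T_def using nf_in_NF[of g] assms
    by (intro bexI[of _ "nf g"] exI[of _ "length p"]) auto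
qed

lemma gamma_nf_if_not_on_T:
  assumes notT: "\<not> on_T g yp" and signs: "\<And>k. 1 \<le> k \<Longrightarrow> k \<le> n \<Longrightarrow> e k \<in> {1, -1}"
    and gam: "nf g = syls i e 1 n @ xpow (i 0)"
  shows "gamma_nf i e n"
proof (rule gamma_nf.intro)
  have nf_yp: "nf g @ [yp] \<notin> NF"
    using notT on_T_if_NF_snoc by blast
  show n_pos: "n \<ge> 1"
    using nf_yp NF_xpow_y[of "i 0" 1] gam by (cases n) (auto simp: syls_empty)
  show "i 0 \<ge> 1"
  proof (rule ccontr)
    assume "\<not> i 0 \<ge> 1"
    have gamma: "nf g = (syls i e 2 n @ xpow (i 1)) @ ylet (e 1) # xpow (i 0)"
      using gam syls_lowest[of 1 n i e] n_pos by (simp add: numeral_2_eq_2)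
    show False
    proof (cases "i 0 = 0 \<and> e 1 = -1")
      case True
      then show False
        using on_T_if_nf_snoc_linv[of g _ yp] gamma notT by simp
    next
      case False
      then have "admissible (e 1) (i 0) 1"
        using \<open>\<not> i 0 \<ge> 1\<close> signs[of 1] n_pos by (auto simp: admissible_def)
      then show False
        using NF_snoc_y[of "syls i e 2 n @ xpow (i 1)" "e 1" "i 0" 1] gamma nf_in_NF[of g]
          signs[of 1] n_pos nf_yp
        by simp
    qed
  qed
qed (use signs nf_in_NF[of g] gam in simp_all)

theorem lemma3p1:
  fixes g :: "letter list" and n :: nat and i e :: "nat \<Rightarrow> int"
  assumes notT: "\<not> on_T g yp"
    and eps: "\<forall>k. 1 \<le> k \<and> k \<le> n \<longrightarrow> e k \<in> {1, -1}"
    and gam: "nf g = syls i e 1 n @ xpow (i 0)"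
  shows "n \<ge> 1 \<and> i 0 \<ge> 1 \<and> mindex i n \<ge> 1 \<and>
    (let m = mindex i n; s = psum i; \<gamma> = nf g;
         \<gamma>' = (if m = n \<or> s m \<noteq> 0 \<or> e (m + 1) = 1
               then syls i e (m + 1) n @ xpow (s m) @ [yp] @ xpow (- s (m - 1) - 1) @ [ylet (e m)]
                    @ syls i e 1 (m - 1) @ xpow (i 0 + 1)
               else syls i e (m + 2) n @ xpow (i (m + 1) + i m - 1) @ [ylet (e m)]
                    @ syls i e 1 (m - 1) @ xpow (i 0 + 1))
     in nf (\<gamma> @ [yp]) = \<gamma>' \<and>
        (\<exists>ks. rewrseq (\<gamma> @ [yp]) ks \<gamma>' \<and>
              filter (\<lambda>k. k \<noteq> FreeR) ks = map (\<lambda>j. YR (s j)) [0..<m]))"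
proof -
  interpret gamma_nf i e n
    using gamma_nf_if_not_on_T notT eps gam by blast
  obtain ks where ks: "rewrseq (nf g @ [yp]) ks (nf_gamma_y i e n)"
    "filter (\<lambda>k. k \<noteq> FreeR) ks = map (\<lambda>j. YR (psum i j)) [0..<m]"
    using rewrseq_nf_gamma_y gam by auto
  have "nf (nf g @ [yp]) = nf_gamma_y i e n"
    using nf_eqI[OF NF_nf_gamma_y] reduces_imp_same_elem[OF rewrseq_imp_reduces[OF ks(1)]] .
  then show ?thesis
    using n_pos i0_pos m_pos ks unfolding nf_gamma_y_def Let_def by blast
qed

end
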